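(* Let $0\le\beta<1$ and let $f(z)=z+\sum_{n\ge2}a_nz^n$ belong to $\mathcal{H}^{\beta}_{\sigma}$. Then \[ |a_2a_4-a_3^2|\le\begin{cases}\dfrac{(1-\beta)^2\left[1+2(1-\beta)^2\right]}{2}, & \beta\in\left[0,\dfrac{11-\sqrt{37}}{12}\right],\\[3mm] \dfrac{(1-\beta)^2\left[60\beta^2-84\beta-25\right]}{16(9\beta^2-15\beta+1)}, & \beta\in\left(\dfrac{11-\sqrt{37}}{12},1\right).\end{cases} \]
   Context: $\mathbb{U}=\{z\in\mathbb{C}:|z|<1\}$. For analytic $f,g$ on $\mathbb{U}$, $f\prec g$ means there is an analytic $w$ on $\mathbb{U}$ with $w(0)=0$, $|w(z)|<1$, and $f(z)=g(w(z))$. $\sigma$ denotes the class of analytic functions $f(z)=z+\sum_{n\ge2}a_nz^n$ on $\mathbb{U}$ that are univalent in $\mathbb{U}$ and whose inverse $g=f^{-1}$ is also univalent in $\mathbb{U}$. For $0\le\beta<1$, $\mathcal{H}^{\beta}_{\sigma}$ is the set of $f\in\sigma$ with $f'(z)\prec\frac{1+(1-2\beta)z}{1-z}$ ($z\in\mathbb{U}$) and $g'(w)\prec\frac{1+(1-2\beta)w}{1-w}$ ($w\in\mathbb{U}$), where $g=f^{-1}$. *)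

theory Defs
  imports "HOL-Analysis.Analysis"
begin

definition unit_disc :: "complex set" where
  "unit_disc = ball 0 1"

definition subordinate :: "(complex \<Rightarrow> complex) \<Rightarrow> (complex \<Rightarrow> complex) \<Rightarrow> bool" where
  "subordinate F G \<longleftrightarrow>
     (\<exists>w. w holomorphic_on unit_disc \<and> w 0 = 0 \<and>
          (\<forall>z\<in>unit_disc. norm (w z) < 1 \<and> F z = G (w z)))"

text \<open>Bi-univalent class sigma: f normalized and univalent on the disc, and the
  inverse of f (determined near 0) extends to a univalent analytic function g on the disc.\<close>
definition bi_univalent_inv :: "(complex \<Rightarrow> complex) \<Rightarrow> (complex \<Rightarrow> complex) \<Rightarrow> bool" where
  "bi_univalent_inv f g \<longleftrightarrow>
     f holomorphic_on unit_disc \<and> inj_on f unit_disc \<and> f 0 = 0 \<and> deriv f 0 = 1 \<and>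
     g holomorphic_on unit_disc \<and> inj_on g unit_disc \<and> g 0 = 0 \<and>
     (\<forall>\<^sub>F w in nhds 0. f (g w) = w)"

definition sigma_class :: "(complex \<Rightarrow> complex) set" where
  "sigma_class = {f. \<exists>g. bi_univalent_inv f g}"

definition p_beta :: "real \<Rightarrow> complex \<Rightarrow> complex" where
  "p_beta \<beta> z = (1 + complex_of_real (1 - 2 * \<beta>) * z) / (1 - z)"

definition H_sigma :: "real \<Rightarrow> (complex \<Rightarrow> complex) set" where
  "H_sigma \<beta> = {f. \<exists>g. bi_univalent_inv f g \<and>
       subordinate (deriv f) (p_beta \<beta>) \<and> subordinate (deriv g) (p_beta \<beta>)}"

definition taylor_coeff :: "(complex \<Rightarrow> complex) \<Rightarrow> nat \<Rightarrow> complex" where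
  "taylor_coeff f n = (deriv ^^ n) f 0 / of_nat (fact n)"

definition hankel_bound :: "real \<Rightarrow> real" where
  "hankel_bound \<beta> =
     (if \<beta> \<le> (11 - sqrt 37) / 12
      then (1 - \<beta>)^2 * (1 + 2 * (1 - \<beta>)^2) / 2
      else (1 - \<beta>)^2 * (60 * \<beta>^2 - 84 * \<beta> - 25) / (16 * (9 * \<beta>^2 - 15 * \<beta> + 1)))"

end

theory Submission
  imports Defs "HOL-Complex_Analysis.Complex_Analysis"
begin

text \<open>
  Write \<open>f' = p\<^sub>\<beta> \<circ> w\<close> with a Schwarz function \<open>w(z) = x z + y z\<^sup>2 + u z\<^sup>3 + \<dots>\<close>.
  Clearing the denominator of \<open>p\<^sub>\<beta>\<close> and comparing Taylor coefficients gives
  \<open>a\<^sub>2 a\<^sub>4 - a\<^sub>3\<^sup>2 = (1 - \<beta>)\<^sup>2 (x u/2 + x\<^sup>2 y/9 + x\<^sup>4/18 - 4 y\<^sup>2/9)\<close>.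
  The classical bounds \<open>|x| \<le> 1\<close>, \<open>|y| \<le> 1 - |x|\<^sup>2\<close> (Schwarz--Pick applied to \<open>w(z)/z\<close>)
  and \<open>|u| \<le> 1\<close> (Cauchy) bound the bracket by \<open>5/9\<close>, and \<open>5(1 - \<beta>)\<^sup>2/9\<close> lies below
  both branches of the stated bound.
\<close>

lemma taylor_coeff_cong_ball:
  assumes "r > 0" and "\<And>z. norm z < r \<Longrightarrow> f z = g z"
  shows "taylor_coeff f n = taylor_coeff g n"
proof -
  have "\<forall>\<^sub>F z in nhds 0. f z = g z"
    using eventually_nhds_in_open[of "ball 0 r" 0] assms by (auto elim!: eventually_mono)
  then show ?thesis
    unfolding taylor_coeff_def by (simp add: higher_deriv_cong_ev)
qed

lemma Schwarz_Pick_deriv_0: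
  fixes \<phi> :: "complex \<Rightarrow> complex"
  assumes hol: "\<phi> holomorphic_on ball 0 1" and lt: "\<And>z. norm z < 1 \<Longrightarrow> norm (\<phi> z) < 1"
  shows "norm (deriv \<phi> 0) \<le> 1 - norm (\<phi> 0)^2"
proof -
  define a where "a = \<phi> 0"
  have a1: "norm a < 1" using lt[of 0] by (simp add: a_def)
  define \<psi> where "\<psi> = Moebius_function 0 a \<circ> \<phi>"
  have hol\<psi>: "\<psi> holomorphic_on ball 0 1"
    unfolding \<psi>_def
    by (rule holomorphic_on_compose_gen[OF hol Moebius_function_holomorphic[OF a1]]) (use lt in auto)
  have \<psi>0: "\<psi> 0 = 0" by (simp add: \<psi>_def a_def Moebius_function_eq_zero)
  have \<psi>lt: "norm (\<psi> z) < 1" if "norm z < 1" for z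
    unfolding \<psi>_def o_def by (rule Moebius_function_norm_lt_1[OF a1 lt[OF that]])
  have pos: "0 < 1 - norm a ^ 2" using a1 by (simp add: abs_square_less_1)
  have cnj_a: "1 - cnj a * a = of_real (1 - norm a ^ 2)"
    using complex_norm_square[of a] by (simp add: mult.commute)
  have ne: "1 - cnj a * a \<noteq> 0"
    unfolding cnj_a using pos by (simp only: of_real_eq_0_iff)
  have "(Moebius_function 0 a has_field_derivative 1 / (1 - cnj a * a)) (at a)"
    unfolding Moebius_function_simple[abs_def] using ne
    by (auto intro!: derivative_eq_intros simp: power2_eq_square)
  moreover have "(\<phi> has_field_derivative deriv \<phi> 0) (at 0)"
    using hol by (intro holomorphic_derivI[of _ "ball 0 1"]) auto
  ultimately have "(\<psi> has_field_derivative 1 / (1 - cnj a * a) * deriv \<phi> 0) (at 0)"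
    unfolding \<psi>_def a_def by (rule DERIV_chain)
  then have "deriv \<psi> 0 = deriv \<phi> 0 / (1 - cnj a * a)"
    by (simp add: DERIV_imp_deriv)
  moreover have "norm (1 - cnj a * a) = 1 - norm a ^ 2"
    unfolding cnj_a norm_of_real using pos by simp
  ultimately have "norm (deriv \<psi> 0) = norm (deriv \<phi> 0) / (1 - norm a ^ 2)"
    by (simp add: norm_divide)
  with Schwarz_Lemma(2)[OF hol\<psi> \<psi>0 \<psi>lt, of 0] pos
  show ?thesis by (simp add: a_def)
qed

lemma self_map_taylor_coeff_le_1:
  fixes w :: "complex \<Rightarrow> complex"
  assumes hol: "w holomorphic_on ball 0 1" and lt: "\<And>z. norm z < 1 \<Longrightarrow> norm (w z) < 1"
  shows "norm (taylor_coeff w n) \<le> 1"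
proof -
  have "norm (taylor_coeff w n) * r ^ n \<le> 1" if r: "0 < r" "r < 1" for r
  proof -
    have "norm ((deriv ^^ n) w 0) \<le> fact n * 1 / r ^ n"
    proof (rule Cauchy_inequality)
      show "w holomorphic_on ball 0 r"
        using hol by (rule holomorphic_on_subset) (use r in auto)
      show "continuous_on (cball 0 r) w"
        using holomorphic_on_imp_continuous_on[OF hol] by (rule continuous_on_subset) (use r in auto)
      show "norm (w x) \<le> 1" if "norm (0 - x) = r" for x
        using lt[of x] that r by auto
    qed (use r in auto)
    then show ?thesis
      using r by (simp add: taylor_coeff_def norm_divide field_simps)
  qed
  then have "\<forall>\<^sub>F r in at_left 1. norm (taylor_coeff w n) * r ^ n \<le> 1"
    using eventually_at_left_real[of 0 "1::real"] by (auto elim!: eventually_mono)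
  moreover have "((\<lambda>r. norm (taylor_coeff w n) * r ^ n) \<longlongrightarrow> norm (taylor_coeff w n) * 1 ^ n) (at_left 1)"
    by (intro tendsto_intros)
  ultimately show ?thesis
    using tendsto_upperbound[of _ _ "at_left (1::real)"] by (simp add: trivial_limit_at_left_real)
qed

lemma Schwarz_taylor_coeff_2:
  fixes w :: "complex \<Rightarrow> complex"
  assumes hol: "w holomorphic_on ball 0 1" and w0: "w 0 = 0"
    and lt: "\<And>z. norm z < 1 \<Longrightarrow> norm (w z) < 1"
  shows "norm (taylor_coeff w 2) \<le> 1 - norm (taylor_coeff w 1)^2"
proof (cases "\<exists>\<alpha>. (\<forall>z. norm z < 1 \<longrightarrow> w z = \<alpha> * z) \<and> norm \<alpha> = 1")
  \<comment> \<open>Unless \<open>w\<close> is a rotation, \<open>w(z)/z\<close> maps the disc into itself and Schwarz--Pick applies.\<close>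
  case True
  then obtain \<alpha> where \<alpha>: "\<And>z. norm z < 1 \<Longrightarrow> w z = \<alpha> * z" and "norm \<alpha> = 1" by blast
  moreover have "taylor_coeff w n = taylor_coeff (\<lambda>z. \<alpha> * z) n" for n
    using \<alpha> by (intro taylor_coeff_cong_ball[of 1]) auto
  ultimately show ?thesis
    by (simp only:) (simp add: taylor_coeff_def)
next
  case False
  obtain h where holh: "h holomorphic_on ball 0 1" and wh: "\<And>z. norm z < 1 \<Longrightarrow> w z = z * h z"
    and h0: "deriv w 0 = h 0"
    using Schwarz3[OF hol w0] by blast
  have h_lt: "norm (h z) < 1" if z: "norm z < 1" for z
  proof (cases "z = 0")
    case True
    then show ?thesis
      using False Schwarz_Lemma(2,3)[OF hol w0 lt] h0 by fastforce
  next
    case z0: False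
    have "norm (w z) < norm z"
      using False Schwarz_Lemma(1,3)[OF hol w0 lt z] z z0 by fastforce
    then show ?thesis
      using z0 by (simp add: wh[OF z] norm_mult)
  qed
  have "taylor_coeff w n = taylor_coeff (\<lambda>z. z * h z) n" for n
    using wh by (intro taylor_coeff_cong_ball[of 1]) auto
  moreover have "(deriv ^^ 2) (\<lambda>z. z * h z) 0 = 2 * deriv h 0"
    using higher_deriv_mult[of "\<lambda>z. z" "ball 0 1" h 0 2] holh by (simp add: eval_nat_numeral)
  ultimately have "taylor_coeff w 1 = h 0" "taylor_coeff w 2 = deriv h 0"
    using h0 by (simp_all add: taylor_coeff_def)
  with Schwarz_Pick_deriv_0[OF holh h_lt] show ?thesis by simp
qed

lemma higher_deriv_Leibniz_recursion:
  fixes F w :: "complex \<Rightarrow> complex"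
  assumes holF: "F holomorphic_on S" and holw: "w holomorphic_on S" and S: "open S" "\<xi> \<in> S"
    and rel: "\<And>z. z \<in> S \<Longrightarrow> F z - 1 = w z * (F z + c)" and n: "n \<ge> 1"
  shows "(deriv ^^ n) F \<xi> =
    (\<Sum>i=0..n. of_nat (n choose i) * (deriv ^^ i) w \<xi> * ((deriv ^^ (n - i)) F \<xi> + (if i = n then c else 0)))"
proof -
  have "(deriv ^^ n) F \<xi> = (deriv ^^ n) (\<lambda>z. F z - 1) \<xi>"
    using higher_deriv_diff[OF holF _ S, of "\<lambda>_. 1" n] n by simp
  also have "\<dots> = (deriv ^^ n) (\<lambda>z. w z * (F z + c)) \<xi>"
    using eventually_nhds_in_open[OF S] rel by (intro higher_deriv_cong_ev) (auto elim!: eventually_mono)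
  also have "\<dots> = (\<Sum>i=0..n. of_nat (n choose i) * (deriv ^^ i) w \<xi> * (deriv ^^ (n - i)) (\<lambda>z. F z + c) \<xi>)"
    by (rule higher_deriv_mult[OF holw _ S]) (intro holomorphic_intros holF)
  also have "\<dots> = (\<Sum>i=0..n. of_nat (n choose i) * (deriv ^^ i) w \<xi> * ((deriv ^^ (n - i)) F \<xi> + (if i = n then c else 0)))"
    using higher_deriv_add[OF holF _ S, of "\<lambda>_. c"] by (intro sum.cong) auto
  finally show ?thesis .
qed

lemma taylor_coeffs_of_deriv_eq_p_beta:
  fixes f w :: "complex \<Rightarrow> complex"
  assumes holf: "f holomorphic_on ball 0 1" and holw: "w holomorphic_on ball 0 1" and w0: "w 0 = 0"
    and w_ne_1: "\<And>z. norm z < 1 \<Longrightarrow> w z \<noteq> 1"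
    and df: "\<And>z. norm z < 1 \<Longrightarrow> deriv f z = p_beta \<beta> (w z)"
  shows "taylor_coeff f 2 = of_real (1 - \<beta>) * taylor_coeff w 1"
    and "taylor_coeff f 3 = 2/3 * of_real (1 - \<beta>) * (taylor_coeff w 1 ^ 2 + taylor_coeff w 2)"
    and "taylor_coeff f 4 = of_real (1 - \<beta>) / 2 *
           (taylor_coeff w 1 ^ 3 + 2 * taylor_coeff w 1 * taylor_coeff w 2 + taylor_coeff w 3)"
proof -
  define c where "c = complex_of_real (1 - 2*\<beta>)"
  define D where "D k = (deriv ^^ k) (deriv f) 0" for k
  define W where "W k = (deriv ^^ k) w 0" for k
  have holf': "deriv f holomorphic_on ball 0 1"
    using holf by (rule holomorphic_deriv) simp
  have "deriv f z - 1 = w z * (deriv f z + c)" if "z \<in> ball 0 1" for z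
    using df[of z] w_ne_1[of z] that
    by (auto simp: p_beta_def c_def field_simps right_diff_distrib)
  then have rel: "D n = (\<Sum>i=0..n. of_nat (n choose i) * W i * (D (n - i) + (if i = n then c else 0)))"
    if "n \<ge> 1" for n
    unfolding D_def W_def using that by (intro higher_deriv_Leibniz_recursion[OF holf' holw]) auto
  have W0: "W 0 = 0" and D0: "D 0 = 1"
    using df[of 0] by (simp_all add: W_def D_def w0 p_beta_def)
  have s: "1 + c = 2 * of_real (1 - \<beta>)" by (simp add: c_def)
  have D1: "D 1 = W 1 * (1 + c)"
    using rel[of 1] W0 D0 by simp
  have D2: "D 2 = 2 * W 1 * D 1 + W 2 * (1 + c)"
    using rel[of 2] W0 D0 by (simp add: eval_nat_numeral)
  have D3: "D 3 = 3 * W 1 * D 2 + 3 * W 2 * D 1 + W 3 * (1 + c)"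
    using rel[of 3] W0 D0 by (simp add: eval_nat_numeral)
  have f_coeff: "taylor_coeff f (Suc k) = D k / fact (Suc k)" for k
    by (simp add: taylor_coeff_def D_def funpow_Suc_right del: funpow.simps) (simp add: algebra_simps)
  have w_coeff: "taylor_coeff w k = W k / fact k" for k
    by (simp add: taylor_coeff_def W_def)
  have a2: "taylor_coeff f 2 = D 1 / 2" and a3: "taylor_coeff f 3 = D 2 / 6"
    and a4: "taylor_coeff f 4 = D 3 / 24"
    using f_coeff[of 1] f_coeff[of 2] f_coeff[of 3] by (simp_all add: eval_nat_numeral fact_numeral)
  show "taylor_coeff f 2 = of_real (1 - \<beta>) * taylor_coeff w 1"
    unfolding a2 w_coeff D1 s by simp
  show "taylor_coeff f 3 = 2/3 * of_real (1 - \<beta>) * (taylor_coeff w 1 ^ 2 + taylor_coeff w 2)"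
    unfolding a3 w_coeff D2 D1 s by (simp add: fact_numeral field_simps power2_eq_square)
  show "taylor_coeff f 4 = of_real (1 - \<beta>) / 2 *
           (taylor_coeff w 1 ^ 3 + 2 * taylor_coeff w 1 * taylor_coeff w 2 + taylor_coeff w 3)"
    unfolding a4 w_coeff D3 D2 D1 s by (simp add: fact_numeral field_simps power3_eq_cube)
qed

lemma hankel_polynomial_majorant_le:
  fixes X Y U :: real
  assumes "0 \<le> X" "X \<le> 1" "0 \<le> Y" "Y \<le> 1 - X^2" "0 \<le> U" "U \<le> 1"
  shows "X*U/2 + X^2*Y/9 + X^4/18 + 4*Y^2/9 \<le> 5/9"
proof -
  have "X*U/2 + X^2*Y/9 + X^4/18 + 4*Y^2/9 \<le> X/2 + X^2*(1-X^2)/9 + X^4/18 + 4*(1-X^2)^2/9"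
    using assms by (intro add_mono mult_left_le divide_right_mono mult_left_mono power_mono) auto
  also have "\<dots> = 5/9 - (1-X) * (7*X*(X-1/3)^2 + 35/3*(X-1/3)^2 + 19/27) / 18"
    by (simp add: field_simps power2_eq_square power4_eq_xxxx)
  also have "\<dots> \<le> 5/9"
    using assms by simp
  finally show ?thesis .
qed

lemma hankel_polynomial_norm_le:
  fixes x y u :: complex
  assumes "norm x \<le> 1" and "norm y \<le> 1 - norm x ^ 2" and "norm u \<le> 1"
  shows "norm (x*u/2 + x^2*y/9 + x^4/18 - 4*y^2/9) \<le> 5/9"
proof -
  have "norm (x*u/2 + x^2*y/9 + x^4/18 - 4*y^2/9)
        \<le> norm (x*u/2) + norm (x^2*y/9) + norm (x^4/18) + norm (4*y^2/9)"
    by (smt (verit) norm_triangle_ineq norm_triangle_ineq4)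
  also have "\<dots> = norm x * norm u/2 + norm x^2 * norm y/9 + norm x^4/18 + 4 * norm y^2/9"
    by (simp add: norm_mult norm_divide norm_power)
  also have "\<dots> \<le> 5/9"
    using assms by (intro hankel_polynomial_majorant_le) auto
  finally show ?thesis .
qed

lemma hankel_bound_ge:
  assumes "0 \<le> \<beta>" and "\<beta> < 1"
  shows "5/9 * (1 - \<beta>)^2 \<le> hankel_bound \<beta>"
proof (cases "\<beta> \<le> (11 - sqrt 37) / 12")
  case True
  have "2 \<le> sqrt 37" by (simp add: real_le_rsqrt)
  then have "1/4 \<le> 1 - \<beta>" using True by simp
  then have "(1/4)^2 \<le> (1 - \<beta>)^2" by (rule power_mono) simp
  then have "5/9 \<le> (1 + 2 * (1 - \<beta>)^2) / 2" by (simp add: power2_eq_square)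
  then have "(1 - \<beta>)^2 * (5/9) \<le> (1 - \<beta>)^2 * ((1 + 2 * (1 - \<beta>)^2) / 2)"
    by (rule mult_left_mono) simp
  then show ?thesis
    using True by (simp add: hankel_bound_def mult.commute)
next
  case False
  have "sqrt 37 \<le> 7" by (rule real_le_lsqrt) auto
  then have "1/3 < \<beta>" using False by simp
  have "9 * \<beta>^2 - 15 * \<beta> + 1 = 9 * (\<beta> - 1/3) * (\<beta> - 1) - 3 * \<beta> - 2"
    by (simp add: algebra_simps power2_eq_square)
  moreover have "9 * (\<beta> - 1/3) * (\<beta> - 1) \<le> 0"
    using assms \<open>1/3 < \<beta>\<close> by (intro mult_nonneg_nonpos) auto
  ultimately have neg: "9 * \<beta>^2 - 15 * \<beta> + 1 < 0"
    using \<open>1/3 < \<beta>\<close> by linarith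
  have "9 * (60 * \<beta>^2 - 84 * \<beta> - 25) - 80 * (9 * \<beta>^2 - 15 * \<beta> + 1) = -180 * (\<beta> - 37/30)^2 - 156/5"
    by (simp add: algebra_simps power2_eq_square)
  moreover have "0 \<le> (\<beta> - 37/30)^2" by simp
  ultimately have "9 * (60 * \<beta>^2 - 84 * \<beta> - 25) \<le> 80 * (9 * \<beta>^2 - 15 * \<beta> + 1)"
    by linarith
  then have "5/9 \<le> (60 * \<beta>^2 - 84 * \<beta> - 25) / (16 * (9 * \<beta>^2 - 15 * \<beta> + 1))"
    using neg by (simp add: le_divide_eq)
  then have "(1 - \<beta>)^2 * (5/9) \<le> (1 - \<beta>)^2 * ((60 * \<beta>^2 - 84 * \<beta> - 25) / (16 * (9 * \<beta>^2 - 15 * \<beta> + 1)))"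
    by (rule mult_left_mono) simp
  then show ?thesis
    using False by (simp add: hankel_bound_def mult.commute)
qed

theorem corollary4p4:
  fixes \<beta> :: real and f :: "complex \<Rightarrow> complex"
  assumes "0 \<le> \<beta>" and "\<beta> < 1" and "f \<in> H_sigma \<beta>"
  shows "norm (taylor_coeff f 2 * taylor_coeff f 4 - (taylor_coeff f 3)^2) \<le> hankel_bound \<beta>"
proof -
  obtain g w where bi: "bi_univalent_inv f g" and holw: "w holomorphic_on ball 0 1" and w0: "w 0 = 0"
    and w_lt: "\<And>z. norm z < 1 \<Longrightarrow> norm (w z) < 1"
    and df: "\<And>z. norm z < 1 \<Longrightarrow> deriv f z = p_beta \<beta> (w z)"
    using assms(3) unfolding H_sigma_def subordinate_def unit_disc_def by auto
  have holf: "f holomorphic_on ball 0 1"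
    using bi unfolding bi_univalent_inv_def unit_disc_def by simp
  define x y u where "x = taylor_coeff w 1" and "y = taylor_coeff w 2" and "u = taylor_coeff w 3"
  have w_ne_1: "w z \<noteq> 1" if "norm z < 1" for z
    using w_lt[OF that] by auto
  define r where "r = complex_of_real (1 - \<beta>)"
  have coeffs: "taylor_coeff f 2 = r * x" "taylor_coeff f 3 = 2/3 * r * (x^2 + y)"
    "taylor_coeff f 4 = r / 2 * (x^3 + 2*x*y + u)"
    using taylor_coeffs_of_deriv_eq_p_beta[OF holf holw w0, of \<beta>] w_ne_1 df
    unfolding r_def x_def y_def u_def by blast+
  define P where "P = x*u/2 + x^2*y/9 + x^4/18 - 4*y^2/9"
  have "taylor_coeff f 2 * taylor_coeff f 4 - (taylor_coeff f 3)^2 = r^2 * P"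
    unfolding coeffs P_def by (simp add: field_simps power2_eq_square power3_eq_cube power4_eq_xxxx)
  moreover have "norm (r^2) = (1 - \<beta>)^2"
    unfolding r_def norm_power norm_of_real by simp
  moreover have "norm P \<le> 5/9"
    unfolding P_def x_def y_def u_def
    by (intro hankel_polynomial_norm_le self_map_taylor_coeff_le_1[OF holw w_lt]
        Schwarz_taylor_coeff_2[OF holw w0 w_lt])
  ultimately have "norm (taylor_coeff f 2 * taylor_coeff f 4 - (taylor_coeff f 3)^2) \<le> (1 - \<beta>)^2 * (5/9)"
    by (metis norm_mult mult_left_mono zero_le_power2)
  also have "\<dots> \<le> hankel_bound \<beta>"
    using hankel_bound_ge[OF assms(1,2)] by (simp add: mult.commute)
  finally show ?thesis .
qed

end
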